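(* Let $\mathcal{H}$ be a hypergraph on $V=\{v_1,\dots,v_n\}$. For $i\le n$ let $V_i=\{v_1,\dots,v_i\}$ and $\mathcal{H}_i=(V_i,\{F\cap V_i\mid F\in\mathcal{H}\})$. Let $k<i\le n$ and $E\in\mathrm{ext}_k(\mathcal{H}_i)$. Then $E\setminus\{v_i\}\in\mathrm{ext}_k(\mathcal{H}_{i-1})$.
   Context: For a hypergraph $\mathcal{H}$ on vertex set $W$, a $k$-trace on $W$ is a pair $(T,S)$ with $S\subseteq W$, $|S|=k$, $T\subseteq S$; $F$ realizes it if $F\cap S=T$. $\mathrm{traces}_k(F)$ is the set of $k$-traces on $W$ realized by $F$, and $\mathrm{traces}_k(\mathcal{H})=\bigcup_{F\in\mathcal{H}}\mathrm{traces}_k(F)$. $\mathrm{ext}_k(\mathcal{H})$ is the hypergraph on $W$ whose hyperedges are all $E\subseteq W$ with $\mathrm{traces}_k(E)\subseteq\mathrm{traces}_k(\mathcal{H})$. *)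

theory Defs
  imports Main
begin

definition traces :: "'a set \<Rightarrow> nat \<Rightarrow> 'a set \<Rightarrow> ('a set \<times> 'a set) set" where
  "traces W k F = {(F \<inter> S, S) | S. S \<subseteq> W \<and> finite S \<and> card S = k}"

definition traces_hg :: "'a set \<Rightarrow> nat \<Rightarrow> 'a set set \<Rightarrow> ('a set \<times> 'a set) set" where
  "traces_hg W k H = (\<Union>F\<in>H. traces W k F)"

definition ext :: "'a set \<Rightarrow> nat \<Rightarrow> 'a set set \<Rightarrow> 'a set set" where
  "ext W k H = {E. E \<subseteq> W \<and> traces W k E \<subseteq> traces_hg W k H}"

(* Vertex ordering V = {v_1,...,v_n} given by a distinct list vs, v_j = vs ! (j-1).
   V_i = {v_1,...,v_i}, H_i = {F \<inter> V_i | F \<in> H}. *)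
definition prefix_set :: "'a list \<Rightarrow> nat \<Rightarrow> 'a set" where
  "prefix_set vs i = set (take i vs)"

definition restrict_hg :: "'a list \<Rightarrow> nat \<Rightarrow> 'a set set \<Rightarrow> 'a set set" where
  "restrict_hg vs i H = (\<lambda>F. F \<inter> prefix_set vs i) ` H"

end

theory Submission
  imports Defs
begin

(* Extension is compatible with shrinking the ground set: if W' \<subseteq> W, a k-trace of E on a set
   S \<subseteq> W' is a k-trace on W, hence realized by some F \<in> H, hence also by F \<inter> W'.  The theorem
   is the instance W' = V_(i-1), W = V_i, where E - {v_i} = E \<inter> V_(i-1). *)

lemma mem_traces:
  "(T, S) \<in> traces W k F \<longleftrightarrow> T = F \<inter> S \<and> S \<subseteq> W \<and> finite S \<and> card S = k"
  unfolding traces_def by auto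

lemma traces_Int_ground: "traces W k (F \<inter> W) = traces W k F"
  by (force simp: mem_traces)

lemma traces_subset_ground:
  assumes "W' \<subseteq> W"
  shows "traces W' k F = {t \<in> traces W k F. snd t \<subseteq> W'}"
  using assms by (force simp: mem_traces)

lemma ext_restrict:
  assumes "W' \<subseteq> W" and "E \<in> ext W k H"
  shows "E \<inter> W' \<in> ext W' k ((\<lambda>F. F \<inter> W') ` H)"
  unfolding ext_def
proof (intro CollectI conjI subsetI)
  fix t assume "t \<in> traces W' k (E \<inter> W')"
  then have t: "t \<in> traces W k E" "snd t \<subseteq> W'"
    using assms(1) by (simp_all add: traces_Int_ground traces_subset_ground)
  then obtain F where "F \<in> H" "t \<in> traces W k F"
    using assms(2) unfolding ext_def traces_hg_def by blast
  then have "t \<in> traces W' k (F \<inter> W')"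
    using t(2) assms(1) by (simp add: traces_Int_ground traces_subset_ground)
  with \<open>F \<in> H\<close> show "t \<in> traces_hg W' k ((\<lambda>F. F \<inter> W') ` H)"
    unfolding traces_hg_def by blast
qed simp

lemma prefix_set_Suc:
  assumes "i < length vs"
  shows "prefix_set vs (Suc i) = insert (vs ! i) (prefix_set vs i)"
  using assms unfolding prefix_set_def by (simp add: take_Suc_conv_app_nth)

lemma nth_notin_prefix_set:
  assumes "distinct vs" and "i < length vs"
  shows "vs ! i \<notin> prefix_set vs i"
  using assms unfolding prefix_set_def by (auto simp: in_set_conv_nth nth_eq_iff_index_eq)

lemma restrict_hg_restrict_hg:
  assumes "j \<le> i"
  shows "(\<lambda>F. F \<inter> prefix_set vs j) ` restrict_hg vs i H = restrict_hg vs j H"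
proof -
  have "prefix_set vs j \<subseteq> prefix_set vs i"
    using assms unfolding prefix_set_def by (rule set_take_subset_set_take)
  then have "prefix_set vs i \<inter> prefix_set vs j = prefix_set vs j"
    by blast
  then show ?thesis
    unfolding restrict_hg_def image_image by (simp add: Int_assoc)
qed

theorem lemma5:
  fixes vs :: "'a list" and H :: "'a set set" and k i :: nat and E :: "'a set"
  assumes "distinct vs"
    and "\<forall>F\<in>H. F \<subseteq> set vs"
    and "k < i" and "i \<le> length vs"
    and "E \<in> ext (prefix_set vs i) k (restrict_hg vs i H)"
  shows "E - {vs ! (i - 1)} \<in> ext (prefix_set vs (i - 1)) k (restrict_hg vs (i - 1) H)"
proof -
  obtain j where i: "i = Suc j"
    using \<open>k < i\<close> less_imp_Suc_add by blast
  have j: "j < length vs"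
    using i \<open>i \<le> length vs\<close> by simp
  have prefix_i: "prefix_set vs i = insert (vs ! j) (prefix_set vs j)"
    using i j by (simp add: prefix_set_Suc)
  have "E - {vs ! j} = E \<inter> prefix_set vs j"
    using assms(5) nth_notin_prefix_set[OF \<open>distinct vs\<close> j]
    unfolding ext_def prefix_i by blast
  moreover have "E \<inter> prefix_set vs j \<in> ext (prefix_set vs j) k (restrict_hg vs j H)"
    using ext_restrict[OF _ assms(5), of "prefix_set vs j"] prefix_i
      restrict_hg_restrict_hg[of j i vs H] i
    by auto
  ultimately show ?thesis
    by (simp add: i)
qed

end
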